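(* Let $P\subseteq\mathrm{Act}^\omega$ and let $L_a,L_r\subseteq\mathrm{Act}^*$ be sets of finite traces (the traces accepted, resp. rejected, by some monitor) such that: (1) verdicts are irrevocable: $L_a$ and $L_r$ are closed under finite extensions ($s\in L_a$ implies $ss'\in L_a$ for all $s'\in\mathrm{Act}^*$, and likewise for $L_r$); (2) soundness: for every $t\in\mathrm{Act}^\omega$, if some finite prefix of $t$ is in $L_r$ then $t\notin P$, and if some finite prefix of $t$ is in $L_a$ then $t\in P$; (3) completeness: every $t\in P$ has a finite prefix in $L_a$ and every $t\in\mathrm{Act}^\omega\setminus P$ has a finite prefix in $L_r$. Then there is a closed recursion-free formula $\varphi$ (built only from $\mathrm{tt},\mathrm{ff},\wedge,\vee,[A],\langle A\rangle$) with $[\![\varphi]\!]_L=P$.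
   Context: $\mathrm{Act}$ is a finite set of actions. Linear-time semantics over $\mathrm{Act}^\omega$ for recursion-free formulae $\varphi::=\mathrm{tt}\mid\mathrm{ff}\mid\varphi\vee\varphi\mid\varphi\wedge\varphi\mid\langle A\rangle\varphi\mid[A]\varphi$ ($A\subseteq\mathrm{Act}$): $[\![\mathrm{tt}]\!]_L=\mathrm{Act}^\omega$, $[\![\mathrm{ff}]\!]_L=\emptyset$, $\vee,\wedge$ union/intersection, $[\![\langle A\rangle\varphi]\!]_L=\{at\mid a\in A,t\in[\![\varphi]\!]_L\}$, $[\![[A]\varphi]\!]_L=\{t\mid\forall a\in A,\forall t'.\ t=at'\Rightarrow t'\in[\![\varphi]\!]_L\}$. *)

theory Defs
  imports Main "HOL-Library.Omega_Words_Fun"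
begin

text \<open>Recursion-free formulae over the action alphabet 'a (Act = UNIV :: 'a set, finite).\<close>
datatype 'a rfform =
    TT
  | FF
  | Or "'a rfform" "'a rfform"
  | And "'a rfform" "'a rfform"
  | Dia "'a set" "'a rfform"
  | Box "'a set" "'a rfform"

text \<open>Linear-time semantics over infinite traces (words nat => 'a).
  A trace t equals a t' iff t 0 = a and t' = suffix 1 t.\<close>
fun lsem :: "'a rfform \<Rightarrow> 'a word set" where
  "lsem TT = UNIV"
| "lsem FF = {}"
| "lsem (Or f g) = lsem f \<union> lsem g"
| "lsem (And f g) = lsem f \<inter> lsem g"
| "lsem (Dia A f) = {t. t 0 \<in> A \<and> suffix 1 t \<in> lsem f}"
| "lsem (Box A f) = {t. t 0 \<in> A \<longrightarrow> suffix 1 t \<in> lsem f}"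

end

theory Submission
  imports Defs
begin

text \<open>Together, the accepted and the rejected traces form an extension-closed set of
  finite words that every infinite word eventually enters. Over a finite alphabet Koenig's
  lemma (the fan theorem) makes this uniform: all words of some fixed length N belong to it.
  Soundness then shows that membership in P depends only on the first N letters, and such a
  property is defined by branching with [{a}] on each letter a, N levels deep.\<close>

definition prefix_determined :: "nat \<Rightarrow> 'a word set \<Rightarrow> bool" where
  "prefix_determined N Q \<longleftrightarrow> (\<forall>t t'. prefix N t = prefix N t' \<longrightarrow> (t \<in> Q \<longleftrightarrow> t' \<in> Q))"

lemma prefix_build: "prefix (Suc n) (a ## w) = a # prefix n w"
  using prefix_conc_snd[of "[a]" "Suc n" w] by simp

lemma prefix_determined_0: "prefix_determined 0 Q \<Longrightarrow> Q = {} \<or> Q = UNIV"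
  unfolding prefix_determined_def by auto

lemma prefix_determined_Suc_residual:
  "prefix_determined (Suc N) Q \<Longrightarrow> prefix_determined N {t. a ## t \<in> Q}"
  unfolding prefix_determined_def by (metis mem_Collect_eq prefix_build)

definition big_And :: "'a rfform list \<Rightarrow> 'a rfform" where
  "big_And fs = foldr And fs TT"

lemma lsem_big_And: "lsem (big_And fs) = (\<Inter>f\<in>set fs. lsem f)"
  unfolding big_And_def by (induction fs) auto

lemma definable_if_residuals_definable:
  fixes Q :: "('a::finite) word set"
  assumes "\<And>a. \<exists>\<phi>. lsem \<phi> = {t. a ## t \<in> Q}"
  shows "\<exists>\<phi>. lsem \<phi> = Q"
proof -
  obtain g where g: "\<And>a. lsem (g a) = {t. a ## t \<in> Q}"
    using assms by metis
  obtain xs :: "'a list" where xs: "set xs = UNIV"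
    using finite_list[OF finite_UNIV] by blast
  have "lsem (big_And (map (\<lambda>a. Box {a} (g a)) xs)) = (\<Inter>a. lsem (Box {a} (g a)))"
    by (simp add: lsem_big_And xs)
  also have "\<dots> = {t. t 0 ## suffix 1 t \<in> Q}"
    by (auto simp: g)
  also have "\<dots> = Q"
    by simp
  finally show ?thesis by blast
qed

lemma prefix_determined_definable:
  fixes Q :: "('a::finite) word set"
  shows "prefix_determined N Q \<Longrightarrow> \<exists>\<phi>. lsem \<phi> = Q"
proof (induction N arbitrary: Q)
  case 0
  then show ?case
    by (metis lsem.simps(1,2) prefix_determined_0)
next
  case (Suc N)
  then show ?case
    by (blast intro: definable_if_residuals_definable prefix_determined_Suc_residual)
qed

definition escapes :: "'a list set \<Rightarrow> 'a list \<Rightarrow> bool" where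
  "escapes L w \<longleftrightarrow> (\<forall>N. \<exists>v. length v = N \<and> w @ v \<notin> L)"

lemma escapes_snoc:
  fixes L :: "('a::finite) list set"
  assumes ext: "\<forall>s\<in>L. \<forall>s'. s @ s' \<in> L"
    and "escapes L w"
  shows "\<exists>a. escapes L (w @ [a])"
proof (rule ccontr)
  assume "\<not> ?thesis"
  then obtain Nf where Nf: "\<And>a v. length v = Nf a \<Longrightarrow> (w @ [a]) @ v \<in> L"
    unfolding escapes_def by metis
  define M where "M = Max (range Nf)"
  have le_M: "Nf a \<le> M" for a
    unfolding M_def by simp
  obtain a v where v: "length v = M" "w @ a # v \<notin> L"
    using \<open>escapes L w\<close> unfolding escapes_def by (metis length_Suc_conv)
  have "(w @ [a]) @ take (Nf a) v \<in> L"
    using Nf[of "take (Nf a) v" a] v(1) le_M[of a] by simp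
  then have "((w @ [a]) @ take (Nf a) v) @ drop (Nf a) v \<in> L"
    using ext by blast
  with v(2) show False
    by simp
qed

lemma fan_theorem:
  fixes L :: "('a::finite) list set"
  assumes ext: "\<forall>s\<in>L. \<forall>s'. s @ s' \<in> L"
    and bar: "\<forall>t. \<exists>n. prefix n t \<in> L"
  shows "\<exists>N. \<forall>v. length v = N \<longrightarrow> v \<in> L"
proof (rule ccontr)
  assume "\<not> ?thesis"
  then have "escapes L []"
    unfolding escapes_def by auto
  moreover have "\<exists>w'. (length w' = Suc n \<and> escapes L w') \<and> (\<exists>a. w' = w @ [a])"
    if w: "length w = n \<and> escapes L w" for w n
  proof -
    obtain a where "escapes L (w @ [a])"
      using w escapes_snoc[OF ext] by blast
    with w show ?thesis
      by (intro exI[of _ "w @ [a]"]) auto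
  qed
  ultimately obtain f where f: "\<And>n. length (f n) = n" "\<And>n. escapes L (f n)"
    and f_Suc: "\<And>n. \<exists>a. f (Suc n) = f n @ [a]"
    using dependent_nat_choice[of "\<lambda>n w. length w = n \<and> escapes L w" "\<lambda>_ w w'. \<exists>a. w' = w @ [a]"]
    by (metis length_0_conv)
  define t where "t n = f (Suc n) ! n" for n
  have "prefix n t = f n" for n
  proof (induction n)
    case 0
    then show ?case using f(1)[of 0] by simp
  next
    case (Suc n)
    obtain a where "f (Suc n) = f n @ [a]"
      using f_Suc by blast
    then show ?case
      using Suc.IH f(1)[of n] by (simp add: t_def nth_append)
  qed
  moreover obtain n where "prefix n t \<in> L"
    using bar by blast
  moreover obtain v where "length v = 0" "f n @ v \<notin> L"
    using f(2)[of n] unfolding escapes_def by blast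
  ultimately show False
    by simp
qed

theorem mainTheorem18:
  fixes P :: "('a::finite) word set"
    and La Lr :: "'a list set"
  assumes ext_a: "\<forall>s\<in>La. \<forall>s'. s @ s' \<in> La"
    and ext_r: "\<forall>s\<in>Lr. \<forall>s'. s @ s' \<in> Lr"
    and sound_r: "\<forall>t. (\<exists>n. prefix n t \<in> Lr) \<longrightarrow> t \<notin> P"
    and sound_a: "\<forall>t. (\<exists>n. prefix n t \<in> La) \<longrightarrow> t \<in> P"
    and compl_a: "\<forall>t\<in>P. \<exists>n. prefix n t \<in> La"
    and compl_r: "\<forall>t. t \<notin> P \<longrightarrow> (\<exists>n. prefix n t \<in> Lr)"
  shows "\<exists>\<phi>. lsem \<phi> = P"
proof -
  have "\<forall>s\<in>La \<union> Lr. \<forall>s'. s @ s' \<in> La \<union> Lr"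
    using ext_a ext_r by blast
  moreover have "\<forall>t. \<exists>n. prefix n t \<in> La \<union> Lr"
    using compl_a compl_r by blast
  ultimately obtain N where N: "\<And>v. length v = N \<Longrightarrow> v \<in> La \<union> Lr"
    using fan_theorem by blast
  have "prefix_determined N P"
    unfolding prefix_determined_def
  proof (intro allI impI)
    fix t t' :: "'a word"
    assume same: "prefix N t = prefix N t'"
    have "prefix N t \<in> La \<union> Lr"
      using N by simp
    then show "t \<in> P \<longleftrightarrow> t' \<in> P"
    proof
      assume "prefix N t \<in> La"
      then show ?thesis
        using same sound_a by metis
    next
      assume "prefix N t \<in> Lr"
      then show ?thesis
        using same sound_r by metis
    qed
  qed
  then show ?thesis
    by (rule prefix_determined_definable)
qed

end
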